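(* Let $C=\bigcap_{i=1}^{m}\{x\in\mathbb{R}^n:\langle x,v_i\rangle\ge 0\}$ be a strictly convex good cone, $C_0=C\setminus\{0\}$, and let $C_0^{\lambda}=(T^n\times C_0)/\Delta$ with $T^n$ acting by multiplication on the first factor. Then $C_0^{\lambda}$ is $T^n$-equivariantly homeomorphic to the toric symplectic cone $S=\big((\iota^*\circ u)^{-1}(0)\setminus\{0\}\big)/K$ associated with $C$.
   Context: A good cone in $\mathbb{R}^n$ is a rational polyhedral cone $C=\bigcap_{i=1}^m\{x:\langle x,v_i\rangle\ge 0\}$ (inequalities minimal), with facets $F_i=\{x\in C:\langle x,v_i\rangle=0\}$ and $v_i\in\mathbb{Z}^n$ the primitive inward normal to $F_i$, such that for $0<l<n$ every codimension-$l$ face is the intersection of exactly $l$ facets and the corresponding normals generate a rank-$l$ direct summand of $\mathbb{Z}^n$; strictly convex means $C$ contains no line. Let $\pi_{\mathbb{Z}}:\mathbb{Z}^m\to\mathbb{Z}^n$ send the $i$-th standard basis vector $e_i$ to $v_i$, with induced maps $\pi_{\mathbb{R}}:\mathbb{R}^m\to\mathbb{R}^n$ and $\pi_T:T^m=\mathbb{R}^m/\mathbb{Z}^m\to T^n=\mathbb{R}^n/\mathbb{Z}^n$ (surjective); let $K=\ker\pi_T$ with inclusion $\iota:K\to T^m$, and $\iota^*:(\mathfrak{t}^m)^*\to\mathfrak{k}^*$ the dual of the induced Lie algebra map. Let $u:\mathbb{C}^m\to(\mathfrak{t}^m)^*=\mathbb{R}^m$, $u(z)=(|z_1|^2,\dots,|z_m|^2)$.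 $T^m$ acts on $\mathbb{C}^m$ in the standard way, $K$ acts freely on $(\iota^*\circ u)^{-1}(0)\setminus\{0\}$, and $T^n=T^m/K$ acts on the quotient $S$ (this $S$ is the toric symplectic cone, i.e. the symplectization of the contact toric manifold, associated with $C$). The equivalence relation $\Delta$ on $T^n\times C_0$: $(g,p)\Delta(h,q)$ iff $p=q$ and $g^{-1}h\in S_p$, where $S_p\subset T^n$ is the closed subgroup generated by the images in $T^n=\mathbb{R}^n/\mathbb{Z}^n$ of the lines $\mathbb{R}v_i$ for all $i$ with $p\in F_i$. *)

theory Defs
  imports "HOL-Analysis.Analysis"
begin

text \<open>T^k = R^k/Z^k is modelled (via x mapsto exp(2 pi i x), componentwise) as the
  set of vectors of unit complex numbers, with componentwise multiplication.\<close>

definition torus :: "(complex^'a) set" where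
  "torus = {z. \<forall>i. cmod (z$i) = 1}"

definition expT :: "real^'a \<Rightarrow> complex^'a" where
  "expT x = (\<chi> j. cis (2 * pi * (x$j)))"

definition tmult :: "complex^'a \<Rightarrow> complex^'a \<Rightarrow> complex^'a" where
  "tmult g h = (\<chi> j. g$j * h$j)"

definition tinv :: "complex^'a \<Rightarrow> complex^'a" where
  "tinv g = (\<chi> j. inverse (g$j))"

definition tone :: "complex^'a" where
  "tone = (\<chi> j. 1)"

definition closed_subgroup_generated :: "(complex^'a) set \<Rightarrow> (complex^'a) set" where
  "closed_subgroup_generated A =
     \<Inter>{H. H \<subseteq> torus \<and> closed H \<and> tone \<in> H \<and>
          (\<forall>g\<in>H. \<forall>h\<in>H. tmult g h \<in> H) \<and> (\<forall>g\<in>H. tinv g \<in> H) \<and> A \<subseteq> H}"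

definition vR :: "('m \<Rightarrow> int^'n) \<Rightarrow> 'm \<Rightarrow> real^'n" where
  "vR v i = (\<chi> j. of_int (v i $ j))"

definition cone :: "('m \<Rightarrow> int^'n) \<Rightarrow> (real^'n) set" where
  "cone v = {x. \<forall>i. x \<bullet> vR v i \<ge> 0}"

definition facet :: "('m \<Rightarrow> int^'n) \<Rightarrow> 'm \<Rightarrow> (real^'n) set" where
  "facet v i = {x \<in> cone v. x \<bullet> vR v i = 0}"

definition int_lattice :: "(real^'n) set" where
  "int_lattice = {x. \<forall>j. x$j \<in> \<int>}"

definition primitive :: "int^'n \<Rightarrow> bool" where
  "primitive w \<longleftrightarrow> (\<forall>(k::int) (u::int^'n). w = (\<chi> j. k * u$j) \<longrightarrow> \<bar>k\<bar> = 1)"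

definition normal_lattice :: "('m \<Rightarrow> int^'n) \<Rightarrow> 'm set \<Rightarrow> (real^'n) set" where
  "normal_lattice v I = {(\<Sum>i\<in>I. of_int (c i) *\<^sub>R vR v i) | c. True}"

definition direct_summand :: "(real^'n) set \<Rightarrow> bool" where
  "direct_summand L \<longleftrightarrow> (\<exists>H. H \<subseteq> int_lattice \<and> 0 \<in> H \<and>
      (\<forall>a\<in>H. \<forall>b\<in>H. a + b \<in> H) \<and> (\<forall>a\<in>H. - a \<in> H) \<and>
      L \<inter> H = {0} \<and> (\<forall>x\<in>int_lattice. \<exists>a\<in>L. \<exists>b\<in>H. x = a + b))"

definition good_cone :: "('m::finite \<Rightarrow> int^'n::finite) \<Rightarrow> bool" where
  "good_cone v \<longleftrightarrow>
     (\<forall>i. primitive (v i)) \<and>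
     \<comment> \<open>the inequalities are minimal\<close>
     (\<forall>i. {x. \<forall>j. j \<noteq> i \<longrightarrow> x \<bullet> vR v j \<ge> 0} \<noteq> cone v) \<and>
     \<comment> \<open>the F i are facets (codimension-one faces)\<close>
     (\<forall>i. facet v i face_of cone v \<and> aff_dim (facet v i) = int CARD('n) - 1) \<and>
     \<comment> \<open>codimension-l faces, 0 < l < n\<close>
     (\<forall>l F. 0 < l \<and> l < CARD('n) \<and> F face_of cone v \<and> aff_dim F = int CARD('n) - int l \<longrightarrow>
        (let I = {i. F \<subseteq> facet v i} in
           card I = l \<and> F = (\<Inter>i\<in>I. facet v i) \<and>
           direct_summand (normal_lattice v I) \<and> dim (normal_lattice v I) = l))"

definition strictly_convex :: "(real^'n) set \<Rightarrow> bool" where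
  "strictly_convex C \<longleftrightarrow> (\<forall>x. x \<in> C \<and> - x \<in> C \<longrightarrow> x = 0)"

definition quotient_topology :: "'a topology \<Rightarrow> ('a \<times> 'a) set \<Rightarrow> 'a set topology" where
  "quotient_topology X R = topology (\<lambda>U. U \<subseteq> topspace X // R \<and>
       openin X {x \<in> topspace X. R `` {x} \<in> U})"

text \<open>pi_T : T^m -> T^n induced by pi_Z (e_i mapsto v_i).\<close>
definition piT :: "('m::finite \<Rightarrow> int^'n) \<Rightarrow> complex^'m \<Rightarrow> complex^'n" where
  "piT v w = (\<chi> j. \<Prod>i\<in>UNIV. (w$i) powi (v i $ j))"

definition Kker :: "('m::finite \<Rightarrow> int^'n) \<Rightarrow> (complex^'m) set" where
  "Kker v = {w \<in> torus. piT v w = tone}"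

definition lieK :: "('m::finite \<Rightarrow> int^'n) \<Rightarrow> (real^'m) set" where
  "lieK v = {\<xi>. \<forall>t::real. expT (t *\<^sub>R \<xi>) \<in> Kker v}"

definition umap :: "complex^'m \<Rightarrow> real^'m" where
  "umap z = (\<chi> i. (cmod (z$i))^2)"

text \<open>(iota^* o u)^{-1}(0) minus the origin; iota^* is restriction of functionals to k.\<close>
definition Zlevel :: "('m::finite \<Rightarrow> int^'n) \<Rightarrow> (complex^'m) set" where
  "Zlevel v = {z. \<forall>\<xi>\<in>lieK v. \<xi> \<bullet> umap z = 0} - {0}"

definition tact :: "complex^'m \<Rightarrow> complex^'m \<Rightarrow> complex^'m" where
  "tact g z = (\<chi> i. g$i * z$i)"

definition orbitrel :: "('m::finite \<Rightarrow> int^'n) \<Rightarrow> ((complex^'m) \<times> (complex^'m)) set" where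
  "orbitrel v = {(z, w). z \<in> Zlevel v \<and> w \<in> Zlevel v \<and> (\<exists>k\<in>Kker v. w = tact k z)}"

definition symp_cone_top :: "('m::finite \<Rightarrow> int^'n) \<Rightarrow> (complex^'m) set topology" where
  "symp_cone_top v = quotient_topology (subtopology euclidean (Zlevel v)) (orbitrel v)"

definition Sp :: "('m \<Rightarrow> int^'n) \<Rightarrow> real^'n \<Rightarrow> (complex^'n) set" where
  "Sp v p = closed_subgroup_generated {expT (t *\<^sub>R vR v i) | t i. p \<in> facet v i}"

definition Delta :: "('m \<Rightarrow> int^'n) \<Rightarrow> (((complex^'n) \<times> (real^'n)) \<times> ((complex^'n) \<times> (real^'n))) set" where
  "Delta v = {((g, p), (h, q)). g \<in> torus \<and> h \<in> torus \<and> p \<in> cone v - {0} \<and> q = p \<and>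
                 tmult (tinv g) h \<in> Sp v p}"

definition Clambda_top :: "('m \<Rightarrow> int^'n) \<Rightarrow> ((complex^'n) \<times> (real^'n)) set topology" where
  "Clambda_top v = quotient_topology
     (prod_topology (subtopology euclidean torus) (subtopology euclidean (cone v - {0}))) (Delta v)"

end

theory Submission
  imports Defs
begin

text \<open>
  Both spaces are quotients of \<open>T\<^sup>m \<times> C\<^sub>0\<close>: the first through \<open>(w, p) \<mapsto> [\<pi>\<^sub>T w, p]\<close>
  (\<open>\<pi>\<^sub>T\<close> is onto because \<open>\<pi>\<^sub>\<real>\<close> is, by strict convexity), the second through
  \<open>(w, p) \<mapsto> [w \<cdot> (\<surd>\<langle>p, v\<^sub>i\<rangle>)\<^sub>i]\<close>, which parametrises the level set because
  \<open>\<iota>\<^sup>* \<circ> u\<close> vanishes exactly on the image of the adjoint \<open>p \<mapsto> (\<langle>p, v\<^sub>i\<rangle>)\<^sub>i\<close> of \<open>\<pi>\<^sub>\<real>\<close>.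
  Both maps are closed, since the fibres over a compact set of base points \<open>p\<close> are compact and \<open>p\<close>
  is recovered continuously on either side (on \<open>S\<close> through the moment map \<open>u\<close> followed by a left
  inverse of the injective adjoint), hence quotient maps. They have the same fibres:
  \<open>S\<^sub>p\<close> is the \<open>\<pi>\<^sub>T\<close>-image of the stabiliser in \<open>T\<^sup>m\<close> of \<open>(\<surd>\<langle>p, v\<^sub>i\<rangle>)\<^sub>i\<close>, the coordinates \<open>i\<close>
  with \<open>p \<in> F\<^sub>i\<close> being free, and \<open>K = ker \<pi>\<^sub>T\<close>. So the two quotient topologies coincide, and the
  induced homeomorphism is equivariant because \<open>T\<^sup>m\<close> is abelian.
\<close>

lemma tone_torus: "tone \<in> torus"
  by (simp add: tone_def torus_def)

lemma tmult_torus: "g \<in> torus \<Longrightarrow> h \<in> torus \<Longrightarrow> tmult g h \<in> torus"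
  by (simp add: tmult_def torus_def norm_mult)

lemma tinv_torus: "g \<in> torus \<Longrightarrow> tinv g \<in> torus"
  by (simp add: tinv_def torus_def norm_inverse)

lemma torus_nonzero: "g \<in> torus \<Longrightarrow> g$i \<noteq> 0"
  by (auto simp: torus_def) (metis norm_zero zero_neq_one)

lemma tmult_assoc: "tmult (tmult a b) c = tmult a (tmult b c)"
  by (simp add: tmult_def vec_eq_iff mult.assoc)

lemma tmult_commute: "tmult a b = tmult b a"
  by (simp add: tmult_def vec_eq_iff mult.commute)

lemma tmult_tone [simp]: "tmult tone a = a" "tmult a tone = a"
  by (simp_all add: tmult_def tone_def vec_eq_iff)

lemma tmult_tinv: "g \<in> torus \<Longrightarrow> tmult (tinv g) g = tone" "g \<in> torus \<Longrightarrow> tmult g (tinv g) = tone"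
  by (auto simp: tmult_def tinv_def tone_def vec_eq_iff torus_nonzero)

lemma tinv_tmult: "tinv (tmult a b) = tmult (tinv a) (tinv b)"
  by (simp add: tmult_def tinv_def vec_eq_iff)

lemma tinv_tinv [simp]: "tinv (tinv a) = a"
  by (simp add: tinv_def vec_eq_iff)

lemma tinv_tone [simp]: "tinv tone = tone"
  by (simp add: tinv_def tone_def vec_eq_iff)

lemma tact_tmult: "tact (tmult g h) z = tact g (tact h z)"
  by (simp add: tact_def tmult_def vec_eq_iff mult.assoc)

lemma tact_tone [simp]: "tact tone z = z"
  by (simp add: tact_def tone_def vec_eq_iff)

lemma expT_add: "expT (x + y) = tmult (expT x) (expT y)"
  by (simp add: expT_def tmult_def cis_mult distrib_left vec_eq_iff)

lemma expT_0: "expT 0 = tone"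
  by (simp add: expT_def tone_def vec_eq_iff)

lemma expT_torus: "expT x \<in> torus"
  by (simp add: expT_def torus_def)

lemma expT_eq_tone_iff: "expT x = tone \<longleftrightarrow> (\<forall>j. x$j \<in> \<int>)"
proof -
  have "cis (2 * pi * a) = 1 \<longleftrightarrow> a \<in> \<int>" for a :: real
  proof
    assume "cis (2 * pi * a) = 1"
    then have "cos (2 * pi * a) = 1" by (metis cis.sel(1) one_complex.sel(1))
    then obtain k :: int where "2 * pi * a = 2 * pi * k" by (auto simp: cos_one_2pi_int)
    then show "a \<in> \<int>" by simp
  qed auto
  then show ?thesis by (simp add: expT_def tone_def vec_eq_iff)
qed

definition torus_log :: "complex^'a \<Rightarrow> real^'a" where
  "torus_log g = (\<chi> j. Arg (g$j) / (2 * pi))"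

lemma expT_torus_log: "g \<in> torus \<Longrightarrow> expT (torus_log g) = g"
  by (simp add: expT_def torus_log_def vec_eq_iff cis_Arg torus_nonzero sgn_div_norm torus_def)

lemma torus_log_component_eq_0: "g$j = 1 \<Longrightarrow> torus_log g $ j = 0"
  by (simp add: torus_log_def)

lemma closed_subgroup_generated_minimal:
  assumes "H \<subseteq> torus" "closed H" "tone \<in> H" "\<And>g h. g \<in> H \<Longrightarrow> h \<in> H \<Longrightarrow> tmult g h \<in> H"
    "\<And>g. g \<in> H \<Longrightarrow> tinv g \<in> H" "\<And>g. g \<in> A \<Longrightarrow> g \<in> H"
  shows "closed_subgroup_generated A \<subseteq> H"
  unfolding closed_subgroup_generated_def using assms by (intro Inter_lower) auto

lemma closed_subgroup_generated_tone: "tone \<in> closed_subgroup_generated A"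
  by (auto simp: closed_subgroup_generated_def)

lemma closed_subgroup_generated_tmult:
  "g \<in> closed_subgroup_generated A \<Longrightarrow> h \<in> closed_subgroup_generated A
    \<Longrightarrow> tmult g h \<in> closed_subgroup_generated A"
  by (auto simp: closed_subgroup_generated_def)

lemma closed_subgroup_generated_tinv:
  "g \<in> closed_subgroup_generated A \<Longrightarrow> tinv g \<in> closed_subgroup_generated A"
  by (auto simp: closed_subgroup_generated_def)

lemma closed_subgroup_generated_superset: "A \<subseteq> closed_subgroup_generated A"
  by (auto simp: closed_subgroup_generated_def)

lemma expT_sum_in_closed_subgroup_generated:
  assumes "finite F" "\<And>i. i \<in> F \<Longrightarrow> expT (f i) \<in> closed_subgroup_generated A"
  shows "expT (\<Sum>i\<in>F. f i) \<in> closed_subgroup_generated A"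
  using assms
  by (induction F rule: finite_induct)
    (auto simp: expT_0 expT_add closed_subgroup_generated_tone closed_subgroup_generated_tmult)

section \<open>The maps \<open>\<pi>\<^sub>\<real>\<close> and \<open>\<pi>\<^sub>T\<close>\<close>

definition piR :: "('m::finite \<Rightarrow> int^'n) \<Rightarrow> real^'m \<Rightarrow> real^'n" where
  "piR v y = (\<Sum>i\<in>UNIV. y$i *\<^sub>R vR v i)"

definition piR_adjoint :: "('m::finite \<Rightarrow> int^'n) \<Rightarrow> real^'n \<Rightarrow> real^'m" where
  "piR_adjoint v p = (\<chi> i. p \<bullet> vR v i)"

lemma linear_piR: "linear (piR v)"
  by (auto simp: piR_def linear_iff scaleR_add_left sum.distrib scaleR_sum_right)

lemma linear_piR_adjoint: "linear (piR_adjoint v)"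
  by (auto simp: piR_adjoint_def linear_iff vec_eq_iff inner_add_left)

lemma inner_piR_adjoint: "y \<bullet> piR_adjoint v p = piR v y \<bullet> p"
  unfolding piR_adjoint_def piR_def inner_vec_def
  by (simp add: sum_distrib_left sum_distrib_right mult_ac) (rule sum.swap)

lemma cone_iff_piR_adjoint_nonneg: "p \<in> cone v \<longleftrightarrow> (\<forall>i. piR_adjoint v p $ i \<ge> 0)"
  by (simp add: piR_adjoint_def cone_def)

lemma piR_adjoint_eq_0D:
  assumes "strictly_convex (cone v)" "piR_adjoint v p = 0"
  shows "p = 0"
proof -
  have "p \<in> cone v" "- p \<in> cone v"
    using assms(2) by (auto simp: cone_def piR_adjoint_def vec_eq_iff)
  then show ?thesis
    using assms(1) by (simp add: strictly_convex_def)
qed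

lemma inj_piR_adjoint:
  assumes "strictly_convex (cone v)"
  shows "inj (piR_adjoint v)"
  using piR_adjoint_eq_0D[OF assms] linear_inj_iff_eq_0[OF linear_piR_adjoint] by blast

lemma surj_piR:
  assumes "strictly_convex (cone v)"
  shows "surj (piR v)"
proof (rule ccontr)
  assume "\<not> surj (piR v)"
  moreover have "span (range (piR v)) = range (piR v)"
    by (simp add: span_eq_iff linear_subspace_image[OF linear_piR subspace_UNIV])
  ultimately have "span (range (piR v)) \<noteq> UNIV"
    by argo
  from span_not_UNIV_orthogonal[OF this] obtain a
    where "a \<noteq> 0" "\<forall>x\<in>span (range (piR v)). a \<bullet> x = 0"
    by blast
  then have "a \<bullet> piR v y = 0" for y
    by (simp add: span_base)
  then have "piR_adjoint v a \<bullet> piR_adjoint v a = 0"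
    by (simp add: inner_piR_adjoint inner_commute)
  then show False
    using piR_adjoint_eq_0D[OF assms] \<open>a \<noteq> 0\<close> by simp
qed

lemma in_range_piR_adjoint:
  assumes "\<And>\<xi>. piR v \<xi> = 0 \<Longrightarrow> \<xi> \<bullet> u = 0"
  shows "u \<in> range (piR_adjoint v)"
proof -
  let ?S = "range (piR_adjoint v)"
  have sp: "span ?S = ?S"
    by (simp add: span_eq_iff linear_subspace_image[OF linear_piR_adjoint subspace_UNIV])
  obtain y z where yz: "y \<in> span ?S" "\<And>w. w \<in> span ?S \<Longrightarrow> orthogonal z w" "u = y + z"
    using orthogonal_subspace_decomp_exists by blast
  have "piR v z \<bullet> p = 0" for p
    using yz(2)[of "piR_adjoint v p"] sp by (auto simp: orthogonal_def inner_piR_adjoint)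
  then have "piR v z = 0"
    using inner_eq_zero_iff by blast
  then have "z \<bullet> u = 0"
    by (rule assms)
  moreover have "z \<bullet> y = 0"
    using yz(2)[OF yz(1)] by (simp add: orthogonal_def)
  ultimately have "z \<bullet> z = 0"
    using yz(3) by (simp add: inner_add_right)
  then have "z = 0"
    by simp
  then show ?thesis
    using yz(1,3) sp by auto
qed

lemma piT_tmult: "piT v (tmult a b) = tmult (piT v a) (piT v b)"
  by (simp add: piT_def tmult_def vec_eq_iff power_int_mult_distrib prod.distrib)

lemma piT_tinv: "piT v (tinv a) = tinv (piT v a)"
  by (simp add: piT_def tinv_def vec_eq_iff power_int_inverse
      prod_inversef[symmetric, unfolded comp_def])

lemma piT_tone [simp]: "piT v tone = tone"
  by (simp add: piT_def tone_def vec_eq_iff)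

lemma piT_torus: "a \<in> torus \<Longrightarrow> piT v a \<in> torus"
  by (simp add: piT_def torus_def norm_power_int flip: prod_norm)

lemma piT_expT: "piT v (expT y) = expT (piR v y)"
proof -
  have prod_cis: "finite A \<Longrightarrow> (\<Prod>i\<in>A. cis (f i)) = cis (\<Sum>i\<in>A. f i)" for A and f :: "'m \<Rightarrow> real"
    by (induction A rule: finite_induct) (auto simp: cis_mult)
  have "(\<Sum>i\<in>UNIV. of_int (v i $ j) * (2 * pi * y$i)) = 2 * pi * (piR v y $ j)" for j
    by (simp add: piR_def vR_def sum_component sum_distrib_left mult_ac)
  then show ?thesis
    by (simp add: piT_def expT_def cis_power_int vec_eq_iff prod_cis)
qed

lemma surj_piT_torus:
  assumes "strictly_convex (cone v)" "h \<in> torus"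
  obtains w where "w \<in> torus" "piT v w = h"
proof -
  obtain y where "piR v y = torus_log h"
    using surj_piR[OF assms(1)] by (metis surjD)
  then have "piT v (expT y) = h"
    by (simp add: piT_expT expT_torus_log assms(2))
  then show ?thesis
    using that expT_torus by blast
qed

lemma lieK_iff: "\<xi> \<in> lieK v \<longleftrightarrow> piR v \<xi> = 0"
proof
  assume "piR v \<xi> = 0"
  then show "\<xi> \<in> lieK v"
    by (simp add: lieK_def Kker_def expT_torus piT_expT expT_0 linear_scale[OF linear_piR])
next
  assume "\<xi> \<in> lieK v"
  then have int: "t * (piR v \<xi> $ j) \<in> \<int>" for t j
    by (simp add: lieK_def Kker_def piT_expT expT_eq_tone_iff linear_scale[OF linear_piR])
  show "piR v \<xi> = 0"
  proof (rule ccontr)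
    assume "piR v \<xi> \<noteq> 0"
    then obtain j where "piR v \<xi> $ j \<noteq> 0"
      by (auto simp: vec_eq_iff)
    then have "(1 / 2 :: real) \<in> \<int>"
      using int[of "1 / (2 * piR v \<xi> $ j)" j] by simp
    then obtain k :: int where "1 / 2 = real_of_int k"
      by (auto elim: Ints_cases)
    then have "1 = 2 * k"
      by linarith
    then show False
      by presburger
  qed
qed

lemma Kker_torus: "k \<in> Kker v \<Longrightarrow> k \<in> torus"
  by (simp add: Kker_def)

lemma Kker_tone: "tone \<in> Kker v"
  by (simp add: Kker_def tone_torus)

lemma Kker_tmult: "a \<in> Kker v \<Longrightarrow> b \<in> Kker v \<Longrightarrow> tmult a b \<in> Kker v"
  by (simp add: Kker_def tmult_torus piT_tmult)

lemma Kker_tinv: "a \<in> Kker v \<Longrightarrow> tinv a \<in> Kker v"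
  by (simp add: Kker_def tinv_torus piT_tinv)

section \<open>The isotropy subgroups \<open>S\<^sub>p\<close>\<close>

lemma closed_torus: "closed torus"
  unfolding torus_def by (intro closed_Collect_all closed_Collect_eq continuous_intros)

lemma bounded_torus: "bounded (torus :: (complex^'a::finite) set)"
proof -
  have "norm w \<le> real CARD('a)" if "w \<in> torus" for w :: "complex^'a"
  proof -
    have "norm w \<le> (\<Sum>i\<in>UNIV. norm (w$i))"
      unfolding norm_vec_def by (rule L2_set_le_sum) auto
    also have "\<dots> = real CARD('a)"
      using that by (simp add: torus_def)
    finally show ?thesis .
  qed
  then show ?thesis
    by (auto simp: bounded_iff)
qed

lemma compact_torus: "compact (torus :: (complex^'a::finite) set)"
  by (simp add: compact_eq_bounded_closed closed_torus bounded_torus)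

lemma continuous_on_piT: "continuous_on torus (piT v)"
  unfolding piT_def by (intro continuous_intros) (auto simp: torus_nonzero)

definition level_stabilizer :: "('m::finite \<Rightarrow> int^'n) \<Rightarrow> real^'n \<Rightarrow> (complex^'m) set" where
  "level_stabilizer v p = {s \<in> torus. \<forall>i. p \<bullet> vR v i \<noteq> 0 \<longrightarrow> s$i = 1}"

lemma compact_level_stabilizer:
  fixes v :: "'m::finite \<Rightarrow> int^'n::finite"
  shows "compact (level_stabilizer v p)"
proof -
  have "closed {s::complex^'m. \<forall>i. p \<bullet> vR v i \<noteq> 0 \<longrightarrow> s$i = 1}"
    by (intro closed_Collect_all closed_Collect_imp closed_Collect_eq continuous_intros) auto
  moreover have "level_stabilizer v p = torus \<inter> {s. \<forall>i. p \<bullet> vR v i \<noteq> 0 \<longrightarrow> s$i = 1}"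
    by (auto simp: level_stabilizer_def)
  ultimately show ?thesis
    by (simp add: compact_Int_closed compact_torus)
qed

lemma level_stabilizer_subset_torus: "level_stabilizer v p \<subseteq> torus"
  by (auto simp: level_stabilizer_def)

lemma level_stabilizer_tmult:
  "a \<in> level_stabilizer v p \<Longrightarrow> b \<in> level_stabilizer v p \<Longrightarrow> tmult a b \<in> level_stabilizer v p"
  by (simp add: level_stabilizer_def tmult_torus) (simp add: tmult_def)

lemma level_stabilizer_tinv: "a \<in> level_stabilizer v p \<Longrightarrow> tinv a \<in> level_stabilizer v p"
  by (simp add: level_stabilizer_def tinv_torus) (simp add: tinv_def)

lemma Sp_tone: "tone \<in> Sp v p"
  by (simp add: Sp_def closed_subgroup_generated_tone)

lemma Sp_tmult: "g \<in> Sp v p \<Longrightarrow> h \<in> Sp v p \<Longrightarrow> tmult g h \<in> Sp v p"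
  by (simp add: Sp_def closed_subgroup_generated_tmult)

lemma Sp_tinv: "g \<in> Sp v p \<Longrightarrow> tinv g \<in> Sp v p"
  by (simp add: Sp_def closed_subgroup_generated_tinv)

lemma Sp_eq_piT_image_level_stabilizer:
  fixes v :: "'m::finite \<Rightarrow> int^'n::finite"
  assumes "p \<in> cone v"
  shows "Sp v p = piT v ` level_stabilizer v p"
proof
  let ?P = "piT v ` level_stabilizer v p"
  show "Sp v p \<subseteq> ?P"
    unfolding Sp_def
  proof (rule closed_subgroup_generated_minimal)
    show "?P \<subseteq> torus"
      by (auto simp: level_stabilizer_def piT_torus)
    show "closed ?P"
      by (intro compact_imp_closed compact_continuous_image compact_level_stabilizer
          continuous_on_subset[OF continuous_on_piT]) (auto simp: level_stabilizer_def)
    have "tone \<in> level_stabilizer v p"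
      using tone_torus by (simp add: level_stabilizer_def tone_def)
    then show "tone \<in> ?P"
      by (metis piT_tone image_eqI)
  next
    fix g h assume "g \<in> ?P" "h \<in> ?P"
    then show "tmult g h \<in> ?P"
      by (auto simp flip: piT_tmult intro: level_stabilizer_tmult)
  next
    fix g assume "g \<in> ?P"
    then show "tinv g \<in> ?P"
      by (auto simp flip: piT_tinv intro: level_stabilizer_tinv)
  next
    fix g assume "g \<in> {expT (t *\<^sub>R vR v i) | t i. p \<in> facet v i}"
    then obtain t i where g: "g = expT (t *\<^sub>R vR v i)" and "p \<bullet> vR v i = 0"
      by (auto simp: facet_def)
    define y :: "real^'m" where "y = (\<chi> j. if j = i then t else 0)"
    have "piR v y = t *\<^sub>R vR v i"
      by (simp add: piR_def y_def if_distrib[of "\<lambda>c. c *\<^sub>R _"] cong: if_cong)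
    moreover have "expT y \<in> level_stabilizer v p"
      using \<open>p \<bullet> vR v i = 0\<close> expT_torus[of y] by (auto simp: level_stabilizer_def expT_def y_def)
    ultimately show "g \<in> ?P"
      using g by (metis piT_expT image_eqI)
  qed
next
  show "piT v ` level_stabilizer v p \<subseteq> Sp v p"
  proof
    fix g assume "g \<in> piT v ` level_stabilizer v p"
    then obtain s where s: "s \<in> level_stabilizer v p" and g: "g = piT v s"
      by blast
    let ?y = "torus_log s"
    have "g = expT (\<Sum>i\<in>UNIV. ?y$i *\<^sub>R vR v i)"
      using s g piT_expT[of v ?y] by (simp add: level_stabilizer_def expT_torus_log piR_def)
    moreover have "expT (?y$i *\<^sub>R vR v i) \<in> Sp v p" for i
    proof (cases "p \<bullet> vR v i = 0")
      case True
      then show ?thesis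
        using assms by (auto simp: Sp_def facet_def intro: closed_subgroup_generated_superset[THEN subsetD])
    next
      case False
      then show ?thesis
        using s by (simp add: level_stabilizer_def torus_log_component_eq_0 expT_0 Sp_def
            closed_subgroup_generated_tone)
    qed
    ultimately show "g \<in> Sp v p"
      unfolding Sp_def by (simp add: expT_sum_in_closed_subgroup_generated)
  qed
qed

section \<open>The level set\<close>

definition level_point :: "('m::finite \<Rightarrow> int^'n) \<Rightarrow> real^'n \<Rightarrow> complex^'m" where
  "level_point v p = (\<chi> i. complex_of_real (sqrt (p \<bullet> vR v i)))"

definition level_map :: "('m::finite \<Rightarrow> int^'n) \<Rightarrow> (complex^'m) \<times> (real^'n) \<Rightarrow> complex^'m" where
  "level_map v x = tact (fst x) (level_point v (snd x))"

lemma umap_tact: "g \<in> torus \<Longrightarrow> umap (tact g z) = umap z"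
  by (simp add: umap_def tact_def torus_def norm_mult vec_eq_iff)

lemma umap_eq_0_iff: "umap z = 0 \<longleftrightarrow> z = 0"
  by (simp add: umap_def vec_eq_iff)

lemma umap_level_map: "w \<in> torus \<Longrightarrow> p \<in> cone v \<Longrightarrow> umap (level_map v (w, p)) = piR_adjoint v p"
  by (simp add: level_map_def umap_tact) (simp add: umap_def level_point_def piR_adjoint_def cone_def vec_eq_iff)

lemma tact_level_map: "tact g (level_map v (w, p)) = level_map v (tmult g w, p)"
  by (simp add: level_map_def tact_tmult)

lemma tact_Zlevel: "g \<in> torus \<Longrightarrow> z \<in> Zlevel v \<Longrightarrow> tact g z \<in> Zlevel v"
  by (simp add: Zlevel_def umap_tact flip: umap_eq_0_iff)

lemma level_map_image:
  assumes sc: "strictly_convex (cone v)"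
  shows "level_map v ` (torus \<times> (cone v - {0})) = Zlevel v"
proof (intro equalityI subsetI)
  fix z assume "z \<in> level_map v ` (torus \<times> (cone v - {0}))"
  then obtain w p where z: "z = level_map v (w, p)" "w \<in> torus" "p \<in> cone v" "p \<noteq> 0"
    by auto
  then have "umap z = piR_adjoint v p"
    by (simp add: umap_level_map)
  then show "z \<in> Zlevel v"
    using piR_adjoint_eq_0D[OF sc] z(4)
    by (auto simp: Zlevel_def inner_piR_adjoint lieK_iff simp flip: umap_eq_0_iff)
next
  fix z assume z: "z \<in> Zlevel v"
  then obtain p where p: "umap z = piR_adjoint v p"
    using in_range_piR_adjoint[of v "umap z"] by (auto simp: Zlevel_def lieK_iff)
  have "p \<in> cone v"
    by (simp add: cone_iff_piR_adjoint_nonneg flip: p) (simp add: umap_def)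
  moreover have "p \<noteq> 0"
    using z p by (auto simp: Zlevel_def linear_0[OF linear_piR_adjoint] simp flip: umap_eq_0_iff)
  moreover define w where "w = (\<chi> i. if z$i = 0 then 1 else sgn (z$i))"
  moreover have "w \<in> torus"
    by (simp add: w_def torus_def norm_sgn)
  moreover have "z = level_map v (w, p)"
  proof -
    have "p \<bullet> vR v i = (cmod (z$i))\<^sup>2" for i
      using p by (simp add: umap_def piR_adjoint_def vec_eq_iff)
    then show ?thesis
      by (simp add: level_map_def level_point_def tact_def w_def vec_eq_iff complex_sgn_def
          scaleR_conv_of_real)
  qed
  ultimately show "z \<in> level_map v ` (torus \<times> (cone v - {0}))"
    by blast
qed

lemma level_map_eq_tact_iff:
  assumes w: "w \<in> torus" "w' \<in> torus" and k: "k \<in> torus" and p: "p \<in> cone v"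
  shows "level_map v (w', p) = tact k (level_map v (w, p))
    \<longleftrightarrow> tmult (tinv k) (tmult (tinv w) w') \<in> level_stabilizer v p"
proof -
  have "w' $ i * level_point v p $ i = k $ i * (w $ i * level_point v p $ i)
      \<longleftrightarrow> (p \<bullet> vR v i \<noteq> 0 \<longrightarrow> inverse (k $ i) * (inverse (w $ i) * w' $ i) = 1)" for i
  proof (cases "p \<bullet> vR v i = 0")
    case False
    then have "level_point v p $ i \<noteq> 0"
      using p by (simp add: level_point_def cone_def order_less_le)
    then show ?thesis
      using False torus_nonzero[OF w(1), of i] torus_nonzero[OF k, of i] by (auto simp: field_simps)
  qed (simp add: level_point_def)
  moreover have "tmult (tinv k) (tmult (tinv w) w') \<in> torus"
    using w k by (intro tmult_torus tinv_torus)
  moreover have "tmult (tinv k) (tmult (tinv w) w') $ i = inverse (k $ i) * (inverse (w $ i) * w' $ i)" for i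
    by (simp add: tmult_def tinv_def)
  ultimately show ?thesis
    unfolding level_map_def level_stabilizer_def tact_def vec_eq_iff by simp
qed

lemma piT_in_image_iff:
  assumes "a \<in> torus" "S \<subseteq> torus"
  shows "piT v a \<in> piT v ` S \<longleftrightarrow> (\<exists>k\<in>Kker v. tmult (tinv k) a \<in> S)"
proof
  assume "piT v a \<in> piT v ` S"
  then obtain s where s: "s \<in> S" "piT v s = piT v a"
    by auto
  then have "s \<in> torus"
    using assms(2) by blast
  define k where "k = tmult a (tinv s)"
  have "k \<in> Kker v"
    using assms(1) \<open>s \<in> torus\<close> s(2) tmult_tinv(2)[OF piT_torus[OF assms(1)]]
    by (simp add: k_def Kker_def tmult_torus tinv_torus piT_tmult piT_tinv)
  moreover have "tmult (tinv k) a = s"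
    using assms(1) \<open>s \<in> torus\<close>
    by (simp add: k_def tmult_def tinv_def vec_eq_iff torus_nonzero)
  ultimately show "\<exists>k\<in>Kker v. tmult (tinv k) a \<in> S"
    using s(1) by auto
next
  assume "\<exists>k\<in>Kker v. tmult (tinv k) a \<in> S"
  then obtain k where "k \<in> Kker v" "tmult (tinv k) a \<in> S"
    by blast
  moreover have "piT v (tmult (tinv k) a) = piT v a"
    using \<open>k \<in> Kker v\<close> by (simp add: Kker_def piT_tmult piT_tinv)
  ultimately show "piT v a \<in> piT v ` S"
    by (metis image_eqI)
qed

lemma Delta_iff_orbitrel_level_map:
  assumes sc: "strictly_convex (cone v)" and w: "w \<in> torus" "w' \<in> torus"
    and p: "p \<in> cone v - {0}" "p' \<in> cone v - {0}"
  shows "((piT v w, p), (piT v w', p')) \<in> Delta v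
    \<longleftrightarrow> (level_map v (w, p), level_map v (w', p')) \<in> orbitrel v"
proof -
  have "(level_map v (w, p), level_map v (w', p')) \<in> orbitrel v
      \<longleftrightarrow> p' = p \<and> (\<exists>k\<in>Kker v. level_map v (w', p) = tact k (level_map v (w, p)))"
  proof -
    have "p' = p" if "k \<in> Kker v" "level_map v (w', p') = tact k (level_map v (w, p))" for k
    proof -
      have "piR_adjoint v p' = piR_adjoint v p"
        using arg_cong[OF that(2), of umap] w p Kker_torus[OF that(1)]
        by (simp add: umap_level_map umap_tact)
      then show ?thesis
        using inj_piR_adjoint[OF sc] by (simp add: inj_eq)
    qed
    moreover have "level_map v (w, p) \<in> Zlevel v" "level_map v (w', p') \<in> Zlevel v"
      using level_map_image[OF sc] w p by auto
    ultimately show ?thesis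
      unfolding orbitrel_def by blast
  qed
  also have "\<dots> \<longleftrightarrow> p' = p \<and> (\<exists>k\<in>Kker v. tmult (tinv k) (tmult (tinv w) w') \<in> level_stabilizer v p)"
    using level_map_eq_tact_iff[OF w Kker_torus] p(1) by blast
  also have "\<dots> \<longleftrightarrow> p' = p \<and> piT v (tmult (tinv w) w') \<in> Sp v p"
    unfolding Sp_eq_piT_image_level_stabilizer[OF DiffD1[OF p(1)]]
    using piT_in_image_iff[OF tmult_torus[OF tinv_torus[OF w(1)] w(2)] level_stabilizer_subset_torus]
    by blast
  also have "\<dots> \<longleftrightarrow> ((piT v w, p), (piT v w', p')) \<in> Delta v"
    using w p by (simp add: Delta_def piT_tmult piT_tinv piT_torus)
  finally show ?thesis ..
qed

lemma equiv_Delta: "equiv (torus \<times> (cone v - {0})) (Delta v)"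
proof (rule equivI)
  show "refl_on (torus \<times> (cone v - {0})) (Delta v)"
    by (auto simp: refl_on_def Delta_def tmult_tinv Sp_tone)
  show "sym (Delta v)"
  proof (rule symI)
    fix a b assume "(a, b) \<in> Delta v"
    then obtain g h p where "a = (g, p)" "b = (h, p)" "g \<in> torus" "h \<in> torus" "p \<in> cone v - {0}"
      "tmult (tinv g) h \<in> Sp v p"
      by (auto simp: Delta_def)
    moreover have "tinv (tmult (tinv g) h) = tmult (tinv h) g"
      by (simp add: tinv_tmult tmult_commute)
    ultimately show "(b, a) \<in> Delta v"
      using Sp_tinv by (fastforce simp: Delta_def)
  qed
  show "trans (Delta v)"
  proof (rule transI)
    fix a b c assume "(a, b) \<in> Delta v" "(b, c) \<in> Delta v"
    then obtain g h k p where "a = (g, p)" "b = (h, p)" "c = (k, p)" "g \<in> torus" "h \<in> torus"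
      "k \<in> torus" "p \<in> cone v - {0}" "tmult (tinv g) h \<in> Sp v p" "tmult (tinv h) k \<in> Sp v p"
      by (auto simp: Delta_def)
    moreover have "tmult (tmult (tinv g) h) (tmult (tinv h) k) = tmult (tinv g) k"
      using \<open>h \<in> torus\<close> by (metis tmult_assoc tmult_tinv(2) tmult_tone(1) tmult_commute)
    ultimately show "(a, c) \<in> Delta v"
      using Sp_tmult by (fastforce simp: Delta_def)
  qed
qed (auto simp: Delta_def)

lemma equiv_orbitrel: "equiv (Zlevel v) (orbitrel v)"
proof (rule equivI)
  show "refl_on (Zlevel v) (orbitrel v)"
    unfolding refl_on_def orbitrel_def using Kker_tone[of v] tact_tone by (simp, metis)
  show "sym (orbitrel v)"
  proof (rule symI)
    fix z w assume "(z, w) \<in> orbitrel v"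
    then obtain k where "z \<in> Zlevel v" "w \<in> Zlevel v" "k \<in> Kker v" "w = tact k z"
      by (auto simp: orbitrel_def)
    moreover have "z = tact (tinv k) w"
      using Kker_torus[OF \<open>k \<in> Kker v\<close>] \<open>w = tact k z\<close> by (simp add: tmult_tinv flip: tact_tmult)
    ultimately show "(w, z) \<in> orbitrel v"
      unfolding orbitrel_def using Kker_tinv by blast
  qed
  show "trans (orbitrel v)"
  proof (rule transI)
    fix x y z assume "(x, y) \<in> orbitrel v" "(y, z) \<in> orbitrel v"
    then obtain k l where "x \<in> Zlevel v" "z \<in> Zlevel v" "k \<in> Kker v" "l \<in> Kker v"
      "z = tact (tmult l k) x"
      by (auto simp: orbitrel_def tact_tmult)
    then show "(x, z) \<in> orbitrel v"
      unfolding orbitrel_def using Kker_tmult by blast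
  qed
qed (auto simp: orbitrel_def)

lemma orbitrel_tact:
  assumes "g \<in> torus" "(z, z') \<in> orbitrel v"
  shows "(tact g z, tact g z') \<in> orbitrel v"
proof -
  obtain k where "k \<in> Kker v" "z' = tact k z" "z \<in> Zlevel v" "z' \<in> Zlevel v"
    using assms(2) by (auto simp: orbitrel_def)
  moreover have "tact g z' = tact k (tact g z)"
    using \<open>z' = tact k z\<close> by (simp flip: tact_tmult add: tmult_commute)
  ultimately show ?thesis
    using assms(1) tact_Zlevel unfolding orbitrel_def by blast
qed

section \<open>Quotient maps\<close>

lemma quotient_map_from_compact_Times:
  fixes f :: "'a::heine_borel \<times> 'b::heine_borel \<Rightarrow> 'c::heine_borel"
  assumes K: "compact K" and f: "continuous_on (K \<times> S) f"
    and \<mu>: "continuous_on (f ` (K \<times> S)) \<mu>" "\<And>w p. w \<in> K \<Longrightarrow> p \<in> S \<Longrightarrow> \<mu> (f (w, p)) = p"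
  shows "quotient_map (top_of_set (K \<times> S)) (top_of_set (f ` (K \<times> S))) f"
proof (rule continuous_closed_imp_quotient_map)
  show "continuous_map (top_of_set (K \<times> S)) (top_of_set (f ` (K \<times> S))) f"
    using f by auto
  show "closed_map (top_of_set (K \<times> S)) (top_of_set (f ` (K \<times> S))) f"
    unfolding closed_map_def
  proof (intro allI impI)
    fix C assume "closedin (top_of_set (K \<times> S)) C"
    text \<open>\<open>f\<close> is proper: the preimage of a compact \<open>U\<close> lies in the compact set \<open>K \<times> \<mu> ` U\<close>.\<close>
    then show "closedin (top_of_set (f ` (K \<times> S))) (f ` C)"
    proof (rule proper_map)
      fix U assume U: "U \<subseteq> f ` (K \<times> S)" "compact U"
      have "compact (\<mu> ` U)"
        using U by (intro compact_continuous_image continuous_on_subset[OF \<mu>(1)])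
      moreover have "\<mu> ` U \<subseteq> S"
        using U(1) \<mu>(2) by auto
      ultimately have "closed ((K \<times> \<mu> ` U) \<inter> f -` U)"
        using K U(2) by (intro continuous_closed_preimage continuous_on_subset[OF f])
          (auto intro: compact_imp_closed compact_Times)
      then have "compact ((K \<times> \<mu> ` U) \<inter> ((K \<times> \<mu> ` U) \<inter> f -` U))"
        using K \<open>compact (\<mu> ` U)\<close> by (intro compact_Int_closed compact_Times)
      moreover have "(K \<times> S) \<inter> f -` U = (K \<times> \<mu> ` U) \<inter> f -` U"
        using U(1) \<mu>(2) by (force simp: subset_iff)
      ultimately show "compact ((K \<times> S) \<inter> f -` U)"
        by (simp add: Int_assoc)
    qed auto
  qed
qed auto

lemma quotient_maps_same_fibres_homeomorphic:
  assumes f: "quotient_map X Y f" and g: "quotient_map X Z g"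
    and fibres: "\<And>x y. x \<in> topspace X \<Longrightarrow> y \<in> topspace X \<Longrightarrow> f x = f y \<longleftrightarrow> g x = g y"
  obtains h where "homeomorphic_map Y Z h" "\<And>x. x \<in> topspace X \<Longrightarrow> h (f x) = g x"
proof -
  obtain h where h: "continuous_map Y Z h" "\<And>x. x \<in> topspace X \<Longrightarrow> h (f x) = g x"
    using quotient_map_lift_exists[OF f quotient_imp_continuous_map[OF g]] fibres by metis
  obtain k where k: "continuous_map Z Y k" "\<And>x. x \<in> topspace X \<Longrightarrow> k (g x) = f x"
    using quotient_map_lift_exists[OF g quotient_imp_continuous_map[OF f]] fibres by metis
  have "homeomorphic_maps Y Z h k"
    unfolding homeomorphic_maps_def
  proof (intro conjI ballI h(1) k(1))
    fix y assume "y \<in> topspace Y"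
    then obtain x where "x \<in> topspace X" "y = f x"
      using quotient_imp_surjective_map[OF f] by blast
    then show "k (h y) = y"
      using h(2) k(2) by simp
  next
    fix z assume "z \<in> topspace Z"
    then obtain x where "x \<in> topspace X" "z = g x"
      using quotient_imp_surjective_map[OF g] by blast
    then show "h (k z) = z"
      using h(2) k(2) by simp
  qed
  then show ?thesis
    using that h(2) homeomorphic_map_maps by blast
qed

lemma istopology_quotient:
  "istopology (\<lambda>U. U \<subseteq> topspace X // R \<and> openin X {x \<in> topspace X. R `` {x} \<in> U})"
proof -
  have "{x \<in> topspace X. R `` {x} \<in> S \<inter> T} =
      {x \<in> topspace X. R `` {x} \<in> S} \<inter> {x \<in> topspace X. R `` {x} \<in> T}" for S T
    by auto
  moreover have "{x \<in> topspace X. R `` {x} \<in> \<Union>\<U>} = (\<Union>S\<in>\<U>. {x \<in> topspace X. R `` {x} \<in> S})" for \<U>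
    by auto
  ultimately show ?thesis
    unfolding istopology_def by (auto intro!: openin_Int openin_Union)
qed

lemma openin_quotient_topology:
  "openin (quotient_topology X R) U \<longleftrightarrow> U \<subseteq> topspace X // R \<and> openin X {x \<in> topspace X. R `` {x} \<in> U}"
  unfolding quotient_topology_def using topology_inverse'[OF istopology_quotient[of X R]] by simp

lemma topspace_quotient_topology:
  assumes "equiv (topspace X) R"
  shows "topspace (quotient_topology X R) = topspace X // R"
proof -
  have "{x \<in> topspace X. R `` {x} \<in> topspace X // R} = topspace X"
    by (auto intro: quotientI)
  then have "openin (quotient_topology X R) (topspace X // R)"
    by (simp add: openin_quotient_topology)
  then show ?thesis
    by (metis openin_quotient_topology openin_subset openin_topspace subset_antisym)
qed

lemma quotient_map_quotient_topology:
  assumes "equiv (topspace X) R"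
  shows "quotient_map X (quotient_topology X R) (\<lambda>x. R `` {x})"
  unfolding quotient_map_def topspace_quotient_topology[OF assms]
  by (auto simp: openin_quotient_topology quotient_def)

lemma continuous_on_level_map: "continuous_on S (level_map v)"
  unfolding level_map_def tact_def level_point_def by (intro continuous_intros)

lemma continuous_on_umap: "continuous_on S umap"
  unfolding umap_def by (intro continuous_intros)

lemma quotient_map_Clambda_top:
  fixes v :: "'m::finite \<Rightarrow> int^'n::finite"
  assumes sc: "strictly_convex (cone v)"
  shows "quotient_map (top_of_set (torus \<times> (cone v - {0}))) (Clambda_top v)
    (\<lambda>x. Delta v `` {(piT v (fst x), snd x)})"
proof -
  let ?W = "torus \<times> (cone v - {0}) :: ((complex^'m) \<times> (real^'n)) set"
  let ?f = "\<lambda>x. (piT v (fst x), snd x)"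
  have image: "?f ` ?W = torus \<times> (cone v - {0})"
  proof (intro equalityI subsetI)
    fix x :: "(complex^'n) \<times> (real^'n)" assume "x \<in> torus \<times> (cone v - {0})"
    then obtain h p where "x = (h, p)" "h \<in> torus" "p \<in> cone v - {0}"
      by blast
    moreover obtain w where "w \<in> torus" "piT v w = h"
      using surj_piT_torus[OF sc \<open>h \<in> torus\<close>] .
    ultimately show "x \<in> ?f ` ?W"
      by (intro image_eqI[of _ _ "(w, p)"]) auto
  qed (auto simp: piT_torus)
  have "continuous_on ?W ?f"
    by (intro continuous_intros continuous_on_compose2[OF continuous_on_piT]) auto
  moreover have "continuous_on (?f ` ?W) snd"
    by (intro continuous_intros)
  ultimately have "quotient_map (top_of_set ?W) (top_of_set (?f ` ?W)) ?f"
    by (intro quotient_map_from_compact_Times compact_torus) auto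
  then show ?thesis
    using quotient_map_compose quotient_map_quotient_topology[of "top_of_set (torus \<times> (cone v - {0}))" "Delta v"]
    by (simp add: Clambda_top_def equiv_Delta comp_def image)
qed

lemma quotient_map_symp_cone_top:
  fixes v :: "'m::finite \<Rightarrow> int^'n::finite"
  assumes sc: "strictly_convex (cone v)"
  shows "quotient_map (top_of_set (torus \<times> (cone v - {0}))) (symp_cone_top v)
    (\<lambda>x. orbitrel v `` {level_map v x})"
proof -
  obtain L where L: "linear L" "L \<circ> piR_adjoint v = id"
    using linear_injective_left_inverse[OF linear_piR_adjoint inj_piR_adjoint[OF sc]] by blast
  text \<open>The moment map followed by a left inverse of \<open>piR_adjoint\<close> recovers the point of the cone.\<close>
  have "continuous_on S (L \<circ> umap)" for S
    using L(1) by (intro continuous_on_compose[OF continuous_on_umap] linear_continuous_on)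
      (simp add: linear_conv_bounded_linear)
  moreover have "(L \<circ> umap) (level_map v (w, p)) = p" if "w \<in> torus" "p \<in> cone v - {0}" for w p
    using that L(2) by (simp add: umap_level_map pointfree_idE)
  ultimately have "quotient_map (top_of_set (torus \<times> (cone v - {0})))
      (top_of_set (level_map v ` (torus \<times> (cone v - {0})))) (level_map v)"
    by (intro quotient_map_from_compact_Times compact_torus continuous_on_level_map)
  then show ?thesis
    using quotient_map_compose quotient_map_quotient_topology[of "top_of_set (Zlevel v)" "orbitrel v"]
    by (simp add: symp_cone_top_def level_map_image[OF sc] equiv_orbitrel comp_def)
qed

lemma Delta_class_eq_iff_orbitrel_class_eq:
  assumes sc: "strictly_convex (cone v)" and xy: "x \<in> torus \<times> (cone v - {0})" "y \<in> torus \<times> (cone v - {0})"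
  shows "Delta v `` {(piT v (fst x), snd x)} = Delta v `` {(piT v (fst y), snd y)}
    \<longleftrightarrow> orbitrel v `` {level_map v x} = orbitrel v `` {level_map v y}"
proof -
  have "Delta v `` {(piT v (fst x), snd x)} = Delta v `` {(piT v (fst y), snd y)}
      \<longleftrightarrow> ((piT v (fst x), snd x), (piT v (fst y), snd y)) \<in> Delta v"
    using xy by (intro eq_equiv_class_iff[OF equiv_Delta]) (auto simp: piT_torus)
  also have "\<dots> \<longleftrightarrow> (level_map v x, level_map v y) \<in> orbitrel v"
    using Delta_iff_orbitrel_level_map[OF sc] xy by (metis mem_Times_iff prod.collapse)
  also have "\<dots> \<longleftrightarrow> orbitrel v `` {level_map v x} = orbitrel v `` {level_map v y}"
    using xy level_map_image[OF sc] by (intro eq_equiv_class_iff[OF equiv_orbitrel, symmetric]) auto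
  finally show ?thesis .
qed

lemma orbitrel_class_tact:
  assumes "g \<in> torus" "z \<in> orbitrel v `` {z\<^sub>0}"
  shows "orbitrel v `` {tact g z} = orbitrel v `` {tact g z\<^sub>0}"
  using assms orbitrel_tact equiv_class_eq[OF equiv_orbitrel] by (metis Image_singleton_iff)

theorem proposition3p2:
  fixes v :: "'m::finite \<Rightarrow> int^'n::finite"
  assumes "good_cone v" and "strictly_convex (cone v)"
  shows "\<exists>\<Phi>. homeomorphic_map (Clambda_top v) (symp_cone_top v) \<Phi> \<and>
           (\<forall>g\<in>torus. \<forall>h p. h \<in> torus \<and> p \<in> cone v - {0} \<longrightarrow>
              (\<forall>z\<in>\<Phi> (Delta v `` {(h, p)}).
                 \<Phi> (Delta v `` {(tmult (piT v g) h, p)}) = orbitrel v `` {tact g z}))"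
proof -
  text \<open>Only strict convexity is used: the good-cone condition makes \<open>K\<close> act freely, so that \<open>S\<close>
    is a manifold, but the two quotient spaces are homeomorphic without it.\<close>
  note sc = assms(2)
  obtain \<Phi> where hom: "homeomorphic_map (Clambda_top v) (symp_cone_top v) \<Phi>"
    and \<Phi>: "\<And>x. x \<in> torus \<times> (cone v - {0}) \<Longrightarrow>
      \<Phi> (Delta v `` {(piT v (fst x), snd x)}) = orbitrel v `` {level_map v x}"
    using quotient_maps_same_fibres_homeomorphic[OF quotient_map_Clambda_top[OF sc]
        quotient_map_symp_cone_top[OF sc]] Delta_class_eq_iff_orbitrel_class_eq[OF sc]
    by (metis topspace_euclidean_subtopology)
  have "\<Phi> (Delta v `` {(tmult (piT v g) h, p)}) = orbitrel v `` {tact g z}"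
    if "g \<in> torus" "h \<in> torus" "p \<in> cone v - {0}" "z \<in> \<Phi> (Delta v `` {(h, p)})" for g h p z
  proof -
    obtain w where "w \<in> torus" "piT v w = h"
      using surj_piT_torus[OF sc \<open>h \<in> torus\<close>] .
    then have "z \<in> orbitrel v `` {level_map v (w, p)}"
      using that(3,4) \<Phi>[of "(w, p)"] by simp
    then have "orbitrel v `` {tact g z} = orbitrel v `` {level_map v (tmult g w, p)}"
      using orbitrel_class_tact[OF \<open>g \<in> torus\<close>] tact_level_map by metis
    then show ?thesis
      using \<Phi>[of "(tmult g w, p)"] \<open>w \<in> torus\<close> \<open>piT v w = h\<close> that(1,3)
      by (simp add: piT_tmult tmult_torus)
  qed
  then show ?thesis
    using hom by blast
qed

end
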